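(* For all $x_1,x_2\ge0$ and $0\le\nu\le\frac12$, $$\sqrt{x_1x_2}\,\left|J_{-\nu}(x_1)J_\nu(x_2)-J_{-\nu}(x_2)J_\nu(x_1)\right|\le\frac{2}{\pi}\sin\pi\nu.$$
   Context: $J_\nu$ and $J_{-\nu}$ denote Bessel functions of the first kind of orders $\nu$ and $-\nu$. *)

theory Defs
  imports "HOL-Analysis.Analysis"
begin

text \<open>Bessel function of the first kind of real order nu, via its power series
  J_nu(x) = sum_k (-1)^k / (k! Gamma(k+nu+1)) (x/2)^(2k+nu), for x > 0.
  1/Gamma is written with rGamma (which is 0 at the poles of Gamma, the standard
  convention). At x = 0 we use the limiting value for nu \<ge> 0 (1 if nu = 0, else 0);
  for nu < 0 the function is singular at 0 and the value is a convention.\<close>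
definition bessel_J :: "real \<Rightarrow> real \<Rightarrow> real" where
  "bessel_J \<nu> x =
     (if x = 0 then (if \<nu> = 0 then 1 else 0)
      else (x / 2) powr \<nu> *
        (\<Sum>k. (-1) ^ k * rGamma (real k + \<nu> + 1) / fact k * (x / 2) ^ (2 * k)))"

end

theory Submission
  imports Defs
begin

(* For x > 0 put u_\<mu>(x) = 2^\<mu> sqrt x J_\<mu>(x). Both u_\<nu> and u_(-\<nu>) solve the Bessel
   equation in normal form u'' = -q u with q(t) = 1 + (1/4 - \<nu>^2)/t^2, and their Wronskian
   is the constant 2 sin(\<pi>\<nu>)/\<pi> (evaluate it at 0 and use the reflection formula for \<Gamma>).
   For a \<le> b the solution h = u_(-\<nu>)(a) u_\<nu> - u_\<nu>(a) u_(-\<nu>) has h(a) = 0 and h'(a) equal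
   to the Wronskian. For 0 \<le> \<nu> \<le> 1/2 the coefficient q is \<ge> 1 and nonincreasing, so the
   energy h'^2 + q h^2 is nonincreasing and h(b)^2 \<le> h'(a)^2, which is the claim. *)

definition power_series :: "(nat \<Rightarrow> real) \<Rightarrow> real \<Rightarrow> real" where
  "power_series c y = (\<Sum>k. c k * y ^ k)"

lemma power_series_has_derivative:
  assumes "\<And>y. summable (\<lambda>k. c k * y ^ k)"
  shows "(power_series c has_real_derivative power_series (diffs c) y) (at y)"
  unfolding power_series_def by (rule termdiffs_strong_converges_everywhere) (rule assms)

definition bessel_coeff :: "real \<Rightarrow> nat \<Rightarrow> real" where
  "bessel_coeff \<mu> k = (-1) ^ k * rGamma (real k + \<mu> + 1) / fact k"

(* J_\<mu>(x) = (x/2)^\<mu> * bessel_series \<mu> (x^2/4) for x > 0. *)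

abbreviation bessel_series :: "real \<Rightarrow> real \<Rightarrow> real" where
  "bessel_series \<mu> \<equiv> power_series (bessel_coeff \<mu>)"

abbreviation bessel_series' :: "real \<Rightarrow> real \<Rightarrow> real" where
  "bessel_series' \<mu> \<equiv> power_series (diffs (bessel_coeff \<mu>))"

abbreviation bessel_series'' :: "real \<Rightarrow> real \<Rightarrow> real" where
  "bessel_series'' \<mu> \<equiv> power_series (diffs (diffs (bessel_coeff \<mu>)))"

lemma bessel_coeff_Suc:
  assumes "\<mu> > -1"
  shows "bessel_coeff \<mu> (Suc k) = - bessel_coeff \<mu> k / ((real k + 1) * (real k + \<mu> + 1))"
proof -
  have pos: "real k + \<mu> + 1 > 0" using assms by simp
  have "rGamma (real (Suc k) + \<mu> + 1) = rGamma (real k + \<mu> + 1) / (real k + \<mu> + 1)"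
    using rGamma_plus1[of "real k + \<mu> + 1"] pos by (simp add: field_simps add_ac)
  then have "bessel_coeff \<mu> (Suc k)
      = (-1) ^ Suc k * (rGamma (real k + \<mu> + 1) / (real k + \<mu> + 1)) / fact (Suc k)"
    unfolding bessel_coeff_def by simp
  with pos show ?thesis
    unfolding bessel_coeff_def by (simp add: fact_Suc field_simps)
qed

lemma summable_bessel_coeff:
  assumes "\<mu> > -1"
  shows "summable (\<lambda>k. bessel_coeff \<mu> k * y ^ k)"
proof (rule summable_ratio_test[where c="1/2" and N="nat \<lceil>2 * \<bar>y\<bar> / (\<mu> + 1)\<rceil>"])
  fix n assume "n \<ge> nat \<lceil>2 * \<bar>y\<bar> / (\<mu> + 1)\<rceil>"
  then have "real n * (\<mu> + 1) \<ge> 2 * \<bar>y\<bar>"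
    using assms by (simp add: field_simps ceiling_le_iff nat_le_iff)
  moreover have "(real n + 1) * (real n + \<mu> + 1) \<ge> real n * (\<mu> + 1)"
    using assms by (simp add: algebra_simps) (smt (verit) of_nat_0_le_iff zero_le_mult_iff)
  ultimately have big: "(real n + 1) * (real n + \<mu> + 1) \<ge> 2 * \<bar>y\<bar>" by linarith
  have pos: "(real n + 1) * (real n + \<mu> + 1) > 0" using assms by simp
  have "norm (bessel_coeff \<mu> (Suc n) * y ^ Suc n)
      = \<bar>bessel_coeff \<mu> n * y ^ n\<bar> * (\<bar>y\<bar> / ((real n + 1) * (real n + \<mu> + 1)))"
    using assms pos by (simp add: bessel_coeff_Suc abs_mult field_simps)
  also have "\<dots> \<le> \<bar>bessel_coeff \<mu> n * y ^ n\<bar> * (1/2)"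
    using big pos by (intro mult_left_mono) (auto simp: field_simps)
  finally show "norm (bessel_coeff \<mu> (Suc n) * y ^ Suc n) \<le> 1/2 * norm (bessel_coeff \<mu> n * y ^ n)"
    by simp
qed simp

lemma
  assumes "\<mu> > -1"
  shows bessel_series_has_derivative: "(bessel_series \<mu> has_real_derivative bessel_series' \<mu> y) (at y)"
    and bessel_series'_has_derivative: "(bessel_series' \<mu> has_real_derivative bessel_series'' \<mu> y) (at y)"
  using summable_bessel_coeff[OF assms]
  by (auto intro!: power_series_has_derivative termdiff_converges_all)

lemma bessel_series_ode:
  assumes "\<mu> > -1"
  shows "y * bessel_series'' \<mu> y + (\<mu> + 1) * bessel_series' \<mu> y + bessel_series \<mu> y = 0"
proof -
  define c where "c = bessel_coeff \<mu>"
  have summable: "summable (\<lambda>k. c k * y ^ k)" "summable (\<lambda>k. diffs c k * y ^ k)"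
    "summable (\<lambda>k. diffs (diffs c) k * y ^ k)"
    using summable_bessel_coeff[OF assms] unfolding c_def by (auto intro!: termdiff_converges_all)
  \<comment> \<open>g (Suc k) is the k-th term of y \<cdot> bessel_series'' \<mu> y\<close>
  define g where "g k = real k * (real k + 1) * c (Suc k) * y ^ k" for k
  have "(\<lambda>k. diffs (diffs c) k * y ^ k * y) = (\<lambda>k. g (Suc k))"
    by (auto simp: g_def diffs_def algebra_simps)
  then have "(\<lambda>k. g (Suc k)) sums (power_series (diffs (diffs c)) y * y)"
    unfolding power_series_def by (metis sums_mult2 summable(3) summable_sums)
  then have "g sums (y * power_series (diffs (diffs c)) y)"
    by (subst (asm) sums_Suc_iff) (simp add: g_def mult.commute)
  then have "(\<lambda>k. g k + (\<mu> + 1) * (diffs c k * y ^ k) + c k * y ^ k) sums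
      (y * power_series (diffs (diffs c)) y + (\<mu> + 1) * power_series (diffs c) y + power_series c y)"
    unfolding power_series_def by (intro sums_add sums_mult summable_sums summable)
  moreover have "g k + (\<mu> + 1) * (diffs c k * y ^ k) + c k * y ^ k = 0" for k
  proof -
    have "(real k + 1) * (real k + \<mu> + 1) \<noteq> 0" using assms by simp
    then have "(real k + 1) * (real k + \<mu> + 1) * c (Suc k) + c k = 0"
      using assms by (simp add: c_def bessel_coeff_Suc)
    moreover have "g k + (\<mu> + 1) * (diffs c k * y ^ k) + c k * y ^ k
        = ((real k + 1) * (real k + \<mu> + 1) * c (Suc k) + c k) * y ^ k"
      by (simp add: g_def diffs_def algebra_simps)
    ultimately show ?thesis by simp
  qed
  ultimately show ?thesis unfolding c_def by (simp add: sums_0 sums_unique2)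
qed

lemma powr_minus_half: "x > 0 \<Longrightarrow> x powr (a - 1/2) = x powr (a + 1/2) / (x::real)"
  using powr_diff[of x "a + 1/2" 1] by (simp add: algebra_simps)

lemma powr_minus_three_halves: "x > 0 \<Longrightarrow> x powr (a - 3/2) = x powr (a + 1/2) / (x::real)\<^sup>2"
  using powr_diff[of x "a + 1/2" 2] by (simp add: algebra_simps)

(* bessel_u \<mu> x = 2^\<mu> sqrt x J_\<mu>(x); bessel_u' is its derivative. *)

definition bessel_u :: "real \<Rightarrow> real \<Rightarrow> real" where
  "bessel_u \<mu> x = x powr (\<mu> + 1/2) * bessel_series \<mu> (x\<^sup>2 / 4)"

definition bessel_u' :: "real \<Rightarrow> real \<Rightarrow> real" where
  "bessel_u' \<mu> x = x powr (\<mu> - 1/2) *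
     ((\<mu> + 1/2) * bessel_series \<mu> (x\<^sup>2 / 4) + x\<^sup>2 / 2 * bessel_series' \<mu> (x\<^sup>2 / 4))"

lemma bessel_u_has_derivative:
  assumes "\<mu> > -1" "x > 0"
  shows "(bessel_u \<mu> has_real_derivative bessel_u' \<mu> x) (at x)"
  unfolding bessel_u_def[abs_def] bessel_u'_def using assms
  by (auto intro!: derivative_eq_intros bessel_series_has_derivative[THEN DERIV_chain2]
      simp: powr_minus_half) (simp add: field_simps power2_eq_square)

lemma bessel_u'_has_derivative:
  assumes "\<mu> > -1" "x > 0"
  shows "(bessel_u' \<mu> has_real_derivative - (1 + (1/4 - \<mu>\<^sup>2) / x\<^sup>2) * bessel_u \<mu> x) (at x)"
proof -
  have ode: "bessel_series'' \<mu> (x\<^sup>2 / 4)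
      = - 4 * ((\<mu> + 1) * bessel_series' \<mu> (x\<^sup>2 / 4) + bessel_series \<mu> (x\<^sup>2 / 4)) / x\<^sup>2"
    using bessel_series_ode[OF assms(1), of "x\<^sup>2 / 4"] assms(2) by (simp add: field_simps)
  show ?thesis
    unfolding bessel_u_def[abs_def] bessel_u'_def[abs_def] using assms
    by (auto intro!: derivative_eq_intros bessel_series_has_derivative[THEN DERIV_chain2]
        bessel_series'_has_derivative[THEN DERIV_chain2]
        simp: ode powr_minus_half powr_minus_three_halves) (simp add: field_simps power2_eq_square)
qed

lemma rGamma_reflection_real: "rGamma (x::real) * rGamma (1 - x) = sin (pi * x) / pi"
proof -
  have "complex_of_real (rGamma x * rGamma (1 - x)) = complex_of_real (sin (pi * x) / pi)"
    using rGamma_reflection_complex[of "complex_of_real x"]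
    by (simp add: rGamma_complex_of_real[symmetric] sin_of_real[symmetric])
  then show ?thesis by (simp only: of_real_eq_iff)
qed

lemma bessel_series_zero: "bessel_series \<mu> 0 = rGamma (\<mu> + 1)"
  unfolding power_series_def using powser_zero[of "bessel_coeff \<mu>"] by (simp add: bessel_coeff_def)

(* The left-hand side is the Wronskian of bessel_u (-\<nu>) and bessel_u \<nu> at x, with y = x^2/4. *)
lemma bessel_series_wronskian:
  assumes "-1 < \<nu>" "\<nu> < 1"
  shows "2 * \<nu> * bessel_series \<nu> y * bessel_series (-\<nu>) y
      + 2 * y * (bessel_series (-\<nu>) y * bessel_series' \<nu> y - bessel_series \<nu> y * bessel_series' (-\<nu>) y)
    = 2 * sin (pi * \<nu>) / pi"
proof -
  define W where "W y = 2 * \<nu> * bessel_series \<nu> y * bessel_series (-\<nu>) y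
      + 2 * y * (bessel_series (-\<nu>) y * bessel_series' \<nu> y - bessel_series \<nu> y * bessel_series' (-\<nu>) y)"
    for y
  have orders: "\<nu> > -1" "-\<nu> > -1" using assms by auto
  have "(W has_real_derivative 0) (at y)" for y
  proof -
    note ode = bessel_series_ode[OF orders(1), of y] bessel_series_ode[OF orders(2), of y]
    show ?thesis
      unfolding W_def[abs_def]
      by (rule derivative_eq_intros bessel_series_has_derivative[OF orders(1)]
          bessel_series_has_derivative[OF orders(2)] bessel_series'_has_derivative[OF orders(1)]
          bessel_series'_has_derivative[OF orders(2)] refl)+
        (use ode in algebra)
  qed
  then have "W y = W 0"
    by (intro DERIV_isconst_all) blast
  also have "\<dots> = 2 * (\<nu> * rGamma (\<nu> + 1)) * rGamma (1 - \<nu>)"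
    by (simp add: W_def bessel_series_zero add.commute)
  also have "\<nu> * rGamma (\<nu> + 1) = rGamma \<nu>"
    by (rule rGamma_plus1)
  finally show ?thesis
    unfolding W_def using rGamma_reflection_real[of \<nu>] by simp
qed

lemma bessel_u_wronskian:
  assumes "-1 < \<nu>" "\<nu> < 1" "x > 0"
  shows "bessel_u (-\<nu>) x * bessel_u' \<nu> x - bessel_u \<nu> x * bessel_u' (-\<nu>) x = 2 * sin (pi * \<nu>) / pi"
proof -
  have "x powr (1/2 - \<nu>) = 1 / x powr (\<nu> - 1/2)" "x powr (-\<nu> - 1/2) = 1 / x powr (\<nu> + 1/2)"
    using powr_minus_divide[of x "\<nu> - 1/2"] powr_minus_divide[of x "\<nu> + 1/2"] by simp_all
  with assms(3) show ?thesis
    using bessel_series_wronskian[OF assms(1,2), of "x\<^sup>2 / 4"]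
    unfolding bessel_u_def bessel_u'_def by (simp add: field_simps power2_eq_square)
qed

lemma oscillator_energy_bound:
  fixes h h' q q' :: "real \<Rightarrow> real"
  assumes "a \<le> b"
    and h: "\<And>t. a \<le> t \<Longrightarrow> t \<le> b \<Longrightarrow> (h has_real_derivative h' t) (at t)"
    and h': "\<And>t. a \<le> t \<Longrightarrow> t \<le> b \<Longrightarrow> (h' has_real_derivative - q t * h t) (at t)"
    and q: "\<And>t. a \<le> t \<Longrightarrow> t \<le> b \<Longrightarrow> (q has_real_derivative q' t) (at t)"
    and q'_nonpos: "\<And>t. a \<le> t \<Longrightarrow> t \<le> b \<Longrightarrow> q' t \<le> 0"
    and "q b \<ge> 1"
  shows "(h b)\<^sup>2 \<le> (h' a)\<^sup>2 + q a * (h a)\<^sup>2"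
proof -
  define E where "E t = (h' t)\<^sup>2 + q t * (h t)\<^sup>2" for t
  have E: "(E has_real_derivative q' t * (h t)\<^sup>2) (at t)" if "a \<le> t" "t \<le> b" for t
    unfolding E_def[abs_def]
    by (rule derivative_eq_intros h[OF that] h'[OF that] q[OF that] refl)+ (simp add: algebra_simps)
  have "E b \<le> E a"
    by (intro DERIV_nonpos_imp_nonincreasing[OF \<open>a \<le> b\<close>])
      (meson E q'_nonpos mult_nonpos_nonneg zero_le_power2)
  moreover have "(h b)\<^sup>2 \<le> q b * (h b)\<^sup>2"
    using \<open>q b \<ge> 1\<close> by (simp add: mult_le_cancel_right1)
  ultimately show ?thesis
    unfolding E_def by (smt (verit) zero_le_power2)
qed

lemma bessel_u_cross_bound:
  assumes "0 \<le> \<nu>" "\<nu> \<le> 1/2" "0 < a" "a \<le> b"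
  shows "\<bar>bessel_u (-\<nu>) a * bessel_u \<nu> b - bessel_u \<nu> a * bessel_u (-\<nu>) b\<bar> \<le> 2 * sin (pi * \<nu>) / pi"
proof -
  define h where "h t = bessel_u (-\<nu>) a * bessel_u \<nu> t - bessel_u \<nu> a * bessel_u (-\<nu>) t" for t
  define h' where "h' t = bessel_u (-\<nu>) a * bessel_u' \<nu> t - bessel_u \<nu> a * bessel_u' (-\<nu>) t" for t
  define q where "q t = 1 + (1/4 - \<nu>\<^sup>2) / t\<^sup>2" for t :: real
  have orders: "\<nu> > -1" "-\<nu> > -1" using assms by auto
  have "\<nu>\<^sup>2 \<le> (1/2)\<^sup>2"
    using assms by (intro power_mono) auto
  then have nonneg: "1/4 - \<nu>\<^sup>2 \<ge> 0" by (simp add: power2_eq_square)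
  have "(h b)\<^sup>2 \<le> (h' a)\<^sup>2 + q a * (h a)\<^sup>2"
  proof (rule oscillator_energy_bound[OF \<open>a \<le> b\<close>])
    fix t assume t: "a \<le> t" "t \<le> b"
    then have "t > 0" using assms by simp
    show "(h has_real_derivative h' t) (at t)"
      unfolding h_def[abs_def] h'_def
      by (rule derivative_eq_intros bessel_u_has_derivative orders \<open>t > 0\<close> refl)+ simp
    show "(h' has_real_derivative - q t * h t) (at t)"
      unfolding h'_def[abs_def]
      by (rule derivative_eq_intros bessel_u'_has_derivative orders \<open>t > 0\<close> refl)+
        (use \<open>t > 0\<close> in \<open>simp add: h_def q_def field_simps\<close>)
    show "(q has_real_derivative - 2 * (1/4 - \<nu>\<^sup>2) / t ^ 3) (at t)"
      unfolding q_def[abs_def] using \<open>t > 0\<close>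
      by (auto intro!: derivative_eq_intros simp: field_simps power2_eq_square power3_eq_cube)
    show "- 2 * (1/4 - \<nu>\<^sup>2) / t ^ 3 \<le> 0"
      using nonneg \<open>t > 0\<close> by (intro divide_nonpos_pos) auto
  next
    show "q b \<ge> 1"
      unfolding q_def using nonneg by simp
  qed
  moreover have "h a = 0" "h' a = 2 * sin (pi * \<nu>) / pi"
    using bessel_u_wronskian[OF _ _ \<open>0 < a\<close>, of \<nu>] assms by (simp_all add: h_def h'_def)
  ultimately have "(h b)\<^sup>2 \<le> (2 * sin (pi * \<nu>) / pi)\<^sup>2"
    by simp
  moreover have "2 * sin (pi * \<nu>) / pi \<ge> 0"
    using assms by (intro divide_nonneg_pos mult_nonneg_nonneg sin_ge_zero) auto
  ultimately show ?thesis
    unfolding h_def by (metis abs_le_square_iff abs_of_nonneg)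
qed

lemma bessel_J_eq_bessel_u:
  assumes "x > 0"
  shows "bessel_J \<mu> x = bessel_u \<mu> x / (2 powr \<mu> * sqrt x)"
proof -
  have "bessel_J \<mu> x = (x / 2) powr \<mu> * bessel_series \<mu> (x\<^sup>2 / 4)"
    using assms by (simp add: bessel_J_def power_series_def bessel_coeff_def power_mult power_divide)
  moreover have "(x / 2) powr \<mu> = x powr (\<mu> + 1/2) / (2 powr \<mu> * sqrt x)"
    using assms by (simp add: powr_half_sqrt[symmetric] powr_divide powr_add)
  ultimately show ?thesis
    unfolding bessel_u_def by simp
qed

lemma sqrt_mult_bessel_J_cross:
  assumes "x1 > 0" "x2 > 0"
  shows "sqrt (x1 * x2) * \<bar>bessel_J (-\<nu>) x1 * bessel_J \<nu> x2 - bessel_J (-\<nu>) x2 * bessel_J \<nu> x1\<bar>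
    = \<bar>bessel_u (-\<nu>) x1 * bessel_u \<nu> x2 - bessel_u \<nu> x1 * bessel_u (-\<nu>) x2\<bar>"
proof -
  have "2 powr (-\<nu>) * 2 powr \<nu> = 1"
    by (simp add: powr_add[symmetric])
  then show ?thesis
    using assms by (simp add: bessel_J_eq_bessel_u real_sqrt_mult abs_mult[symmetric] field_simps)
qed

theorem mainTheorem6:
  fixes x1 x2 \<nu> :: real
  assumes "x1 \<ge> 0" and "x2 \<ge> 0" and "0 \<le> \<nu>" and "\<nu> \<le> 1 / 2"
  shows "sqrt (x1 * x2) *
           \<bar>bessel_J (-\<nu>) x1 * bessel_J \<nu> x2 - bessel_J (-\<nu>) x2 * bessel_J \<nu> x1\<bar>
         \<le> 2 / pi * sin (pi * \<nu>)"
proof (cases "x1 = 0 \<or> x2 = 0")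
  case True
  moreover have "2 / pi * sin (pi * \<nu>) \<ge> 0"
    using assms by (intro mult_nonneg_nonneg sin_ge_zero) auto
  ultimately show ?thesis by auto
next
  case False
  with assms have "x1 > 0" "x2 > 0" by auto
  have "\<bar>bessel_u (-\<nu>) x1 * bessel_u \<nu> x2 - bessel_u \<nu> x1 * bessel_u (-\<nu>) x2\<bar> \<le> 2 * sin (pi * \<nu>) / pi"
  proof (cases "x1 \<le> x2")
    case True
    with bessel_u_cross_bound assms \<open>x1 > 0\<close> show ?thesis by blast
  next
    case False
    with bessel_u_cross_bound[of \<nu> x2 x1] assms \<open>x2 > 0\<close> show ?thesis
      by (simp add: abs_minus_commute mult.commute)
  qed
  with \<open>x1 > 0\<close> \<open>x2 > 0\<close> show ?thesis
    by (simp add: sqrt_mult_bessel_J_cross)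
qed

end
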